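(* Let $T,R,\epsilon,\lambda>0$ and let $U=(\phi,A)$ with $A=A_0dy^0+A_1dy^1+A_2dy^2$ be a smooth configuration on $[0,T]\times\overline{B_\nu(R)}$, $B_\nu(R)\subset\mathbb R^2$. For $s\in[0,T]$ write $U(s)$ for the 2d configuration $(\phi(s,\cdot),A_1(s,\cdot)dy^1+A_2(s,\cdot)dy^2)$. Then for all $r\in(0,R)$ and $t\in(0,T)$, $$\Big|\int_{B_\nu(r)}\omega(U(t))-\int_{B_\nu(r)}\omega(U(0))\Big|\le\max\{1,\lambda^{-1}\}\int_{(0,t)\times\partial B_\nu(r)}e^{3d}_{\epsilon,\lambda}(U)\,d\mathcal H^2,$$ where $e^{3d}_{\epsilon,\lambda}(U)=\frac12\sum_{a=0}^2|D_a\phi|^2+\frac{\epsilon^2}2\sum_{0\le a<b\le2}F_{ab}^2+\frac{\lambda}{8\epsilon^2}(|\phi|^2-1)^2$.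
   Context: Points of $(0,T)\times B_\nu(R)$ are written $(y^0,y^\nu)$, $y^\nu=(y^1,y^2)$, $B_\nu(r)=\{|y^\nu|<r\}$. $D_a\phi=\partial_a\phi-iA_a\phi$, $F_{ab}=\partial_aA_b-\partial_bA_a$, $\langle f,g\rangle=\mathrm{Re}(f\bar g)$. For a 2d configuration $V=(\phi,A_1dy^1+A_2dy^2)$: $j(V)=(\langle i\phi,D_1\phi\rangle,\langle i\phi,D_2\phi\rangle)$, $\omega(V)=\frac12(\partial_1j_2-\partial_2j_1+F_{12})$. $\mathcal H^2$ is two-dimensional Hausdorff measure. *)

theory Defs
  imports "HOL-Analysis.Analysis"
begin

fun Ck_on :: "nat \<Rightarrow> 'a::real_normed_vector set \<Rightarrow> ('a \<Rightarrow> 'b::real_normed_vector) \<Rightarrow> bool" where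
  "Ck_on 0 S f = continuous_on S f"
| "Ck_on (Suc n) S f = (f differentiable_on S \<and>
      (\<forall>v. Ck_on n S (\<lambda>x. frechet_derivative f (at x) v)))"

definition smooth_on :: "'a::real_normed_vector set \<Rightarrow> ('a \<Rightarrow> 'b::real_normed_vector) \<Rightarrow> bool" where
  "smooth_on S f \<longleftrightarrow> (\<forall>k. Ck_on k S f)"

(* points of space-time (y0,y1,y2) *)
type_synonym pt3 = "real \<times> real \<times> real"
type_synonym pt2 = "real \<times> real"

definition evec3 :: "nat \<Rightarrow> pt3" where
  "evec3 a = (if a = 0 then (1,0,0) else if a = 1 then (0,1,0) else (0,0,1))"

definition evec2 :: "nat \<Rightarrow> pt2" where
  "evec2 a = (if a = 1 then (1,0) else (0,1))"

definition pd3 :: "nat \<Rightarrow> (pt3 \<Rightarrow> 'b::real_normed_vector) \<Rightarrow> pt3 \<Rightarrow> 'b" where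
  "pd3 a f p = frechet_derivative f (at p) (evec3 a)"

definition pd2 :: "nat \<Rightarrow> (pt2 \<Rightarrow> 'b::real_normed_vector) \<Rightarrow> pt2 \<Rightarrow> 'b" where
  "pd2 a f p = frechet_derivative f (at p) (evec2 a)"

definition rinner :: "complex \<Rightarrow> complex \<Rightarrow> real" where
  "rinner f g = Re (f * cnj g)"

(* 2d configuration: phi, and A = A 1 dy1 + A 2 dy2 (A indexed by a \<in> {1,2}) *)
type_synonym config2 = "(pt2 \<Rightarrow> complex) \<times> (nat \<Rightarrow> pt2 \<Rightarrow> real)"
(* 3d configuration: phi, and A = A 0 dy0 + A 1 dy1 + A 2 dy2 *)
type_synonym config3 = "(pt3 \<Rightarrow> complex) \<times> (nat \<Rightarrow> pt3 \<Rightarrow> real)"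

definition cov2 :: "config2 \<Rightarrow> nat \<Rightarrow> pt2 \<Rightarrow> complex" where
  "cov2 V a y = pd2 a (fst V) y - \<i> * complex_of_real (snd V a y) * fst V y"

definition cov3 :: "config3 \<Rightarrow> nat \<Rightarrow> pt3 \<Rightarrow> complex" where
  "cov3 U a p = pd3 a (fst U) p - \<i> * complex_of_real (snd U a p) * fst U p"

definition curv2 :: "config2 \<Rightarrow> nat \<Rightarrow> nat \<Rightarrow> pt2 \<Rightarrow> real" where
  "curv2 V a b y = pd2 a (snd V b) y - pd2 b (snd V a) y"

definition curv3 :: "config3 \<Rightarrow> nat \<Rightarrow> nat \<Rightarrow> pt3 \<Rightarrow> real" where
  "curv3 U a b p = pd3 a (snd U b) p - pd3 b (snd U a) p"

definition jcur :: "config2 \<Rightarrow> nat \<Rightarrow> pt2 \<Rightarrow> real" where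
  "jcur V a y = rinner (\<i> * fst V y) (cov2 V a y)"

definition vort :: "config2 \<Rightarrow> pt2 \<Rightarrow> real" where
  "vort V y = (pd2 1 (jcur V 2) y - pd2 2 (jcur V 1) y + curv2 V 1 2 y) / 2"

definition slice :: "config3 \<Rightarrow> real \<Rightarrow> config2" where
  "slice U s = ((\<lambda>y. fst U (s, y)), (\<lambda>a y. snd U a (s, y)))"

definition e3d :: "real \<Rightarrow> real \<Rightarrow> config3 \<Rightarrow> pt3 \<Rightarrow> real" where
  "e3d \<epsilon> lam U p =
     (1/2) * (\<Sum>a\<in>{0,1,2::nat}. (cmod (cov3 U a p))\<^sup>2)
   + (\<epsilon>\<^sup>2/2) * (\<Sum>(a,b)\<in>{(0,1),(0,2),(1,2::nat)}. (curv3 U a b p)\<^sup>2)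
   + (lam / (8 * \<epsilon>\<^sup>2)) * ((cmod (fst U p))\<^sup>2 - 1)\<^sup>2"

(* integral over the lateral cylinder (0,t) x dB(r) w.r.t. H^2, written through the
   isometric parametrisation (s,theta) \<mapsto> (s, r cos theta, r sin theta), area element r ds dtheta *)
definition cyl_integral :: "real \<Rightarrow> real \<Rightarrow> (pt3 \<Rightarrow> real) \<Rightarrow> real" where
  "cyl_integral t r f =
     integral ({0<..<t} \<times> {0<..<2*pi}) (\<lambda>(s,\<theta>). f (s, r * cos \<theta>, r * sin \<theta>) * r)"

end

theory Submission
  imports Defs
begin

text \<open>
  Write \<open>Q\<^sub>a = j\<^sub>a + A\<^sub>a\<close> for \<open>a = 0, 1, 2\<close>, with the current \<open>j\<^sub>a = \<langle>i\<phi>, D\<^sub>a\<phi>\<rangle>\<close>. On every time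
  slice the vorticity is half the planar curl of \<open>(Q\<^sub>1, Q\<^sub>2)\<close>, so by Green's theorem on the disc
  \<open>2 \<integral>\<^bsub>B(r)\<^esub> \<omega>(U(s))\<close> is the circulation of \<open>Q\<^sub>1 dy\<^sup>1 + Q\<^sub>2 dy\<^sup>2\<close> around \<open>\<partial>B(r)\<close> at time \<open>s\<close>.
  Stokes' theorem on the lateral cylinder \<open>(0,t) \<times> \<partial>B(r)\<close>, applied to the 1-form \<open>Q\<close>, turns the
  change of circulation into the flux of the components \<open>\<partial>\<^sub>0Q\<^sub>a - \<partial>\<^sub>aQ\<^sub>0\<close> (\<open>a = 1, 2\<close>).
  Thanks to the symmetry of second derivatives of \<open>\<phi>\<close> these equal
  \<open>2\<langle>iD\<^sub>0\<phi>, D\<^sub>a\<phi>\<rangle> + F\<^sub>0\<^sub>a (1 - |\<phi>|\<^sup>2)\<close>, and the Cauchy--Schwarz and Young inequalities bound the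
  tangential combination pointwise by \<open>max 1 \<lambda>\<^sup>-\<^sup>1\<close> times the energy density.
\<close>

section \<open>Polar coordinates\<close>

lemma box_Pair_eq: "box (a,c) (b,d) = box a b \<times> box (c::'b::euclidean_space) (d::'b)"
  by (auto simp: mem_box Basis_prod_def inner_Pair ball_Un)

text \<open>The change of variables theorem is stated for \<open>real^'n\<close>; these maps transfer it to \<open>real \<times> real\<close>.\<close>

definition vec_of_pair :: "real \<times> real \<Rightarrow> real^2" where
  "vec_of_pair p = vector [fst p, snd p]"

definition pair_of_vec :: "real^2 \<Rightarrow> real \<times> real" where
  "pair_of_vec x = (x$1, x$2)"

lemma vec_of_pair_nth [simp]: "vec_of_pair p $ 1 = fst p" "vec_of_pair p $ 2 = snd p"
  by (simp_all add: vec_of_pair_def)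

lemma pair_of_vec_of_pair [simp]: "pair_of_vec (vec_of_pair p) = p"
  by (simp add: pair_of_vec_def vec_of_pair_def)

lemma vec_of_pair_of_vec [simp]: "vec_of_pair (pair_of_vec x) = x"
  by (simp add: pair_of_vec_def vec_of_pair_def vec_eq_iff forall_2)

lemma vec_of_pair_eq_iff [simp]: "vec_of_pair p = vec_of_pair q \<longleftrightarrow> p = q"
  by (metis pair_of_vec_of_pair)

lemma image_vec_of_pair: "vec_of_pair ` A = pair_of_vec -` A"
  by (auto intro: image_eqI[of _ vec_of_pair "pair_of_vec _"])

lemma image_pair_of_vec: "pair_of_vec ` B = vec_of_pair -` B"
  by (auto intro: image_eqI[of _ pair_of_vec "vec_of_pair _"])

lemma bounded_linear_vec_of_pair: "bounded_linear vec_of_pair"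
  by (rule bounded_linear_intro[where K=1])
     (auto simp: vec_of_pair_def vec_eq_iff forall_2 norm_vec_def L2_set_def UNIV_2 norm_Pair)

lemma bounded_linear_pair_of_vec: "bounded_linear pair_of_vec"
  by (rule bounded_linear_intro[where K=1])
     (auto simp: pair_of_vec_def norm_vec_def L2_set_def UNIV_2 norm_Pair)

lemma vec_of_pair_cbox: "vec_of_pair ` cbox u v = cbox (vec_of_pair u) (vec_of_pair v)"
  unfolding image_vec_of_pair
  by (cases u, cases v) (auto simp: pair_of_vec_def vec_of_pair_def mem_box_cart forall_2 cbox_Pair_eq)

lemma pair_of_vec_cbox: "pair_of_vec ` cbox x y = cbox (pair_of_vec x) (pair_of_vec y)"
  unfolding image_pair_of_vec
  by (auto simp: pair_of_vec_def vec_of_pair_def mem_box_cart forall_2 cbox_Pair_eq)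

lemma measure_vec_of_pair_cbox: "measure lborel (vec_of_pair ` cbox u v) = measure lborel (cbox u v)"
proof (cases "cbox u v = {}")
  case True
  then show ?thesis by simp
next
  case False
  obtain a b c d where uv: "u = (a,b)" "v = (c,d)" by fastforce
  with False have "a \<le> c" "b \<le> d" by (auto simp: cbox_Pair_eq)
  then have "vec_of_pair u \<in> cbox (vec_of_pair u) (vec_of_pair v)"
    by (simp add: uv vec_of_pair_def mem_box_cart forall_2)
  then have "cbox (vec_of_pair u) (vec_of_pair v) \<noteq> {}" by blast
  then show ?thesis
    unfolding vec_of_pair_cbox uv content_Pair
    using \<open>a \<le> c\<close> \<open>b \<le> d\<close> by (simp add: content_cbox_cart UNIV_2 vec_of_pair_def)
qed

lemma has_integral_comp_vec_of_pair:
  fixes f :: "real^2 \<Rightarrow> 'a::banach"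
  assumes "bounded S" "(f has_integral i) S"
  shows "((\<lambda>p. f (vec_of_pair p)) has_integral i) (pair_of_vec ` S)"
proof -
  obtain a where S: "S \<subseteq> cbox (-a) a"
    using assms(1) bounded_subset_cbox_symmetric by blast
  have "((\<lambda>x. if x \<in> S then f x else 0) has_integral i) (cbox (-a) a)"
    using S assms(2) by simp
  then have "((\<lambda>p. if vec_of_pair p \<in> S then f (vec_of_pair p) else 0) has_integral (1 / 1) *\<^sub>R i)
      (pair_of_vec ` cbox (-a) a)"
  proof (rule has_integral_twiddle[rotated -1])
    show "continuous (at p) vec_of_pair" for p
      by (simp add: bounded_linear_vec_of_pair linear_continuous_at)
    show "\<exists>w z. vec_of_pair ` cbox u v = cbox w z" for u v
      by (metis vec_of_pair_cbox)
    show "\<exists>w z. pair_of_vec ` cbox u v = cbox w z" for u v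
      by (metis pair_of_vec_cbox)
    show "measure lborel (vec_of_pair ` cbox u v) = 1 * measure lborel (cbox u v)" for u v
      by (simp add: measure_vec_of_pair_cbox)
  qed auto
  moreover have "vec_of_pair p \<in> S \<longleftrightarrow> p \<in> pair_of_vec ` S" for p
    by (simp add: image_pair_of_vec)
  moreover have "pair_of_vec ` S \<subseteq> pair_of_vec ` cbox (-a) a"
    using S by blast
  ultimately show ?thesis
    by (simp add: has_integral_restrict)
qed

definition polar :: "real \<times> real \<Rightarrow> real \<times> real" where
  "polar p = (fst p * cos (snd p), fst p * sin (snd p))"

lemma has_derivative_polar:
  "(polar has_derivative (\<lambda>v. (fst v * cos (snd p) - fst p * snd v * sin (snd p),
      fst v * sin (snd p) + fst p * snd v * cos (snd p)))) (at p within X)"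
  unfolding polar_def
  by (rule derivative_eq_intros refl | simp)+ (auto simp: algebra_simps fun_eq_iff)

lemma norm_polar: "norm (polar p) = \<bar>fst p\<bar>"
proof -
  have "(fst p * cos (snd p))\<^sup>2 + (fst p * sin (snd p))\<^sup>2 = (fst p)\<^sup>2"
    by (simp add: power_mult_distrib flip: distrib_left)
  then show ?thesis
    by (simp add: polar_def norm_Pair)
qed

lemma complex_polar: "Complex (fst (polar p)) (snd (polar p)) = of_real (fst p) * cis (snd p)"
  by (simp add: polar_def complex_eq_iff)

lemma inj_on_polar: "inj_on polar ({0<..} \<times> {0..<2*pi})"
proof (rule inj_onI)
  fix p q assume p: "p \<in> {0<..} \<times> {0..<2*pi}" and q: "q \<in> {0<..} \<times> {0..<2*pi}"
    and pq: "polar p = polar q"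
  have "snd p = Arg2pi (Complex (fst (polar p)) (snd (polar p)))"
    using p by (intro Arg2pi_unique[symmetric]) (auto simp: complex_polar cis_conv_exp)
  moreover have "snd q = Arg2pi (Complex (fst (polar p)) (snd (polar p)))"
    unfolding pq using q by (intro Arg2pi_unique[symmetric]) (auto simp: complex_polar cis_conv_exp)
  moreover have "fst p = fst q"
    using arg_cong[OF pq, of norm] p q by (auto simp: norm_polar)
  ultimately show "p = q" by (simp add: prod_eq_iff)
qed

lemma ball_diff_polar_image: "ball 0 r - polar ` box (0,0) (r, 2*pi) \<subseteq> {x. x \<bullet> (0,1) = 0}"
proof
  fix x :: "real \<times> real" assume x: "x \<in> ball 0 r - polar ` box (0,0) (r, 2*pi)"
  define z where "z = Complex (fst x) (snd x)"
  have norm_z: "cmod z = norm x"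
    by (cases x) (simp add: z_def norm_Pair cmod_def)
  show "x \<in> {x. x \<bullet> (0,1) = 0}"
  proof (rule ccontr)
    assume "x \<notin> {x. x \<bullet> (0,1) = 0}"
    then have "snd x \<noteq> 0"
      by (metis (mono_tags) inner_Pair inner_real_def mem_Collect_eq mult_zero_right mult_1_right
          add_0 prod.collapse)
    then have "z \<notin> \<real>"
      by (simp add: z_def complex_is_Real_iff)
    then have "0 < cmod z" "0 < Arg2pi z"
      using Arg2pi_eq_0[of z] Arg2pi[of z] by (auto simp: order_less_le)
    moreover have "cmod z < r"
      using x norm_z by simp
    ultimately have "(cmod z, Arg2pi z) \<in> box (0,0) (r, 2*pi)"
      using Arg2pi[of z] by (simp add: box_Pair_eq)
    moreover have "polar (cmod z, Arg2pi z) = x"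
      by (simp add: polar_def cos_Arg2pi sin_Arg2pi z_def)
    ultimately show False
      using x by blast
  qed
qed

definition polar_vec :: "real^2 \<Rightarrow> real^2" where
  "polar_vec x = vec_of_pair (polar (pair_of_vec x))"

definition polar_vec_deriv :: "real^2 \<Rightarrow> real^2 \<Rightarrow> real^2" where
  "polar_vec_deriv x v = vec_of_pair (v$1 * cos (x$2) - x$1 * v$2 * sin (x$2),
     v$1 * sin (x$2) + x$1 * v$2 * cos (x$2))"

lemma has_derivative_polar_vec: "(polar_vec has_derivative polar_vec_deriv x) (at x within S)"
proof -
  note has_derivative_compose[OF bounded_linear_imp_has_derivative[OF bounded_linear_pair_of_vec]
      has_derivative_polar]
  from has_derivative_compose[OF this bounded_linear_imp_has_derivative[OF bounded_linear_vec_of_pair]]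
  show ?thesis
    unfolding polar_vec_def[abs_def] polar_vec_deriv_def by (simp add: pair_of_vec_def)
qed

lemma det_polar_vec_deriv: "det (matrix (polar_vec_deriv x)) = x$1"
  by (simp add: det_2 matrix_def polar_vec_deriv_def vec_of_pair_def axis_def algebra_simps)
     (simp add: power2_eq_square[symmetric] flip: distrib_left)

lemma has_integral_polar_vec_change_of_variables:
  fixes F :: "real^2 \<Rightarrow> real^1"
  assumes "continuous_on (cbox (vec_of_pair (0,0)) (vec_of_pair (r,2*pi))) (\<lambda>x. F (polar_vec x))"
  defines "S \<equiv> box (vec_of_pair (0,0)) (vec_of_pair (r,2*pi))"
  obtains I where "(F has_integral I) (polar_vec ` S)" "((\<lambda>x. x$1 *\<^sub>R F (polar_vec x)) has_integral I) S"
proof -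
  define G where "G = (\<lambda>x. \<bar>det (matrix (polar_vec_deriv x))\<bar> *\<^sub>R F (polar_vec x))"
  have "inj_on polar (box (0,0) (r,2*pi))"
    by (rule inj_on_subset[OF inj_on_polar]) (auto simp: box_Pair_eq)
  moreover have "S = vec_of_pair ` box (0,0) (r,2*pi)"
    unfolding S_def image_vec_of_pair
    by (auto simp: pair_of_vec_def vec_of_pair_def mem_box_cart forall_2 box_Pair_eq)
  ultimately have "inj_on polar_vec S"
    unfolding polar_vec_def by (auto simp: inj_on_def)
  have "(\<lambda>x. x$1 *\<^sub>R F (polar_vec x)) absolutely_integrable_on S"
    unfolding S_def absolutely_integrable_on_open_interval
    by (intro absolutely_integrable_continuous continuous_intros assms(1))
  then have G: "G absolutely_integrable_on S"
    by (rule absolutely_integrable_spike[OF _ negligible_empty])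
       (auto simp: G_def det_polar_vec_deriv S_def mem_box_cart forall_2)
  moreover have "S \<in> sets lebesgue"
    by (simp add: S_def fmeasurableD lmeasurable_open)
  ultimately have "F absolutely_integrable_on polar_vec ` S" "integral (polar_vec ` S) F = integral S G"
    using has_absolute_integral_change_of_variables[OF _ has_derivative_polar_vec \<open>inj_on polar_vec S\<close>,
        of F "integral S G", folded G_def]
    by auto
  then have "(F has_integral integral S G) (polar_vec ` S)"
    by (metis absolutely_integrable_on_def integrable_integral)
  moreover have "((\<lambda>x. x$1 *\<^sub>R F (polar_vec x)) has_integral integral S G) S"
    using G unfolding absolutely_integrable_on_def
    by (auto intro: has_integral_eq[rotated] simp: G_def det_polar_vec_deriv S_def mem_box_cart forall_2)
  ultimately show ?thesis
    using that by blast
qed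

lemma has_integral_polar_image:
  fixes f :: "real \<times> real \<Rightarrow> real"
  assumes f: "continuous_on (cball 0 r) f"
  defines "R \<equiv> box (0,0) (r,2*pi)"
  obtains I where "(f has_integral I) (polar ` R)" "((\<lambda>p. fst p * f (polar p)) has_integral I) R"
proof -
  define F where "F x = (vec (f (pair_of_vec x)) :: real^1)" for x
  have "continuous_on (cbox (vec_of_pair (0,0)) (vec_of_pair (r,2*pi))) (\<lambda>x. f (polar (pair_of_vec x)))"
  proof (rule continuous_on_compose2[OF f])
    show "continuous_on (cbox (vec_of_pair (0,0)) (vec_of_pair (r,2*pi))) (\<lambda>x. polar (pair_of_vec x))"
      unfolding polar_def pair_of_vec_def by (intro continuous_intros)
  qed (auto simp: norm_polar mem_box_cart forall_2 pair_of_vec_def)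
  then have "continuous_on (cbox (vec_of_pair (0,0)) (vec_of_pair (r,2*pi))) (\<lambda>x. F (polar_vec x))"
    unfolding F_def polar_vec_def vec_def by (intro continuous_intros) auto
  then obtain I where
    I: "(F has_integral I) (polar_vec ` S)" "((\<lambda>x. x$1 *\<^sub>R F (polar_vec x)) has_integral I) S"
    if "S = box (vec_of_pair (0,0)) (vec_of_pair (r,2*pi))" for S
    by (rule has_integral_polar_vec_change_of_variables) blast
  have R: "R = pair_of_vec ` box (vec_of_pair (0,0)) (vec_of_pair (r,2*pi))"
    unfolding R_def image_pair_of_vec
    by (auto simp: pair_of_vec_def vec_of_pair_def mem_box_cart forall_2 box_Pair_eq)
  have "polar ` R \<subseteq> ball 0 r"
    by (auto simp: R_def box_Pair_eq norm_polar)
  moreover have "polar_vec ` box (vec_of_pair (0,0)) (vec_of_pair (r,2*pi)) = vec_of_pair ` polar ` R"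
    by (simp add: R polar_vec_def image_image)
  ultimately have "bounded (polar_vec ` box (vec_of_pair (0,0)) (vec_of_pair (r,2*pi)))"
    by (metis bounded_ball bounded_linear_image bounded_linear_vec_of_pair bounded_subset)
  from has_integral_comp_vec_of_pair[OF this has_integral_linear[OF I(1) bounded_linear_vec_nth]]
  have "(f has_integral I $ 1) (polar ` R)"
    by (simp add: R F_def polar_vec_def image_image o_def)
  moreover from has_integral_comp_vec_of_pair[OF bounded_box has_integral_linear[OF I(2) bounded_linear_vec_nth]]
  have "((\<lambda>p. fst p * f (polar p)) has_integral I $ 1) R"
    by (simp add: R F_def polar_vec_def o_def)
  ultimately show ?thesis
    using that by blast
qed

lemma integral_ball_polar:
  fixes f :: "real \<times> real \<Rightarrow> real"
  assumes "continuous_on (cball 0 r) f"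
  shows "integral (ball 0 r) f = integral (cbox (0,0) (r,2*pi)) (\<lambda>p. fst p * f (polar p))"
proof -
  define R where "R = box (0::real,0::real) (r,2*pi)"
  obtain I where I: "(f has_integral I) (polar ` R)" "((\<lambda>p. fst p * f (polar p)) has_integral I) R"
    using has_integral_polar_image[OF assms] unfolding R_def by blast
  have "polar ` R \<subseteq> ball 0 r"
    by (auto simp: R_def box_Pair_eq norm_polar)
  moreover have "negligible {x :: real \<times> real. x \<bullet> (0,1) = 0}"
    by (rule negligible_standard_hyperplane) (simp add: Basis_prod_def)
  ultimately have "(f has_integral I) (ball 0 r)"
    using ball_diff_polar_image[of r]
    by (intro has_integral_spike_set_eq[THEN iffD1, OF _ _ I(1)])
       (auto simp: R_def Diff_eq_empty_iff[THEN iffD2] elim!: negligible_subset)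
  moreover have "((\<lambda>p. fst p * f (polar p)) has_integral I) (cbox (0,0) (r,2*pi))"
    using I(2) by (simp add: R_def has_integral_open_interval)
  ultimately show ?thesis
    by (simp add: integral_unique)
qed

section \<open>Green's theorem on rectangles and symmetry of mixed partial derivatives\<close>

lemma integral_rectangle_vector_derivative_fst:
  fixes G g :: "real \<times> real \<Rightarrow> 'a::banach"
  assumes "a \<le> b" and g: "continuous_on (cbox (a,c) (b,d)) g"
    and G: "\<And>x y. x \<in> {a..b} \<Longrightarrow> y \<in> {c..d} \<Longrightarrow>
      ((\<lambda>x. G (x,y)) has_vector_derivative g (x,y)) (at x within {a..b})"
  shows "integral (cbox (a,c) (b,d)) g = integral {c..d} (\<lambda>y. G (b,y) - G (a,y))"
proof -
  have "integral (cbox (a,c) (b,d)) g = integral {c..d} (\<lambda>y. integral {a..b} (\<lambda>x. g (x,y)))"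
    using integral_prod_continuous[OF g] integral_swap_continuous[of a c b d "\<lambda>x y. g (x,y)"] g
    by simp
  also have "\<dots> = integral {c..d} (\<lambda>y. G (b,y) - G (a,y))"
    by (intro integral_cong integral_unique fundamental_theorem_of_calculus \<open>a \<le> b\<close> G)
  finally show ?thesis .
qed

lemma integral_rectangle_vector_derivative_snd:
  fixes G g :: "real \<times> real \<Rightarrow> 'a::banach"
  assumes "c \<le> d" and g: "continuous_on (cbox (a,c) (b,d)) g"
    and G: "\<And>x y. x \<in> {a..b} \<Longrightarrow> y \<in> {c..d} \<Longrightarrow>
      ((\<lambda>y. G (x,y)) has_vector_derivative g (x,y)) (at y within {c..d})"
  shows "integral (cbox (a,c) (b,d)) g = integral {a..b} (\<lambda>x. G (x,d) - G (x,c))"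
proof -
  have "integral (cbox (a,c) (b,d)) g = integral {a..b} (\<lambda>x. integral {c..d} (\<lambda>y. g (x,y)))"
    using integral_prod_continuous[OF g] by simp
  also have "\<dots> = integral {a..b} (\<lambda>x. G (x,d) - G (x,c))"
    by (intro integral_cong integral_unique fundamental_theorem_of_calculus \<open>c \<le> d\<close> G)
  finally show ?thesis .
qed

lemma green_rectangle:
  fixes P Q Py Qx :: "real \<times> real \<Rightarrow> 'a::banach"
  assumes "a \<le> b" "c \<le> d"
    and cont: "continuous_on (cbox (a,c) (b,d)) Qx" "continuous_on (cbox (a,c) (b,d)) Py"
    and Q: "\<And>x y. x \<in> {a..b} \<Longrightarrow> y \<in> {c..d} \<Longrightarrow>
      ((\<lambda>x. Q (x,y)) has_vector_derivative Qx (x,y)) (at x within {a..b})"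
    and P: "\<And>x y. x \<in> {a..b} \<Longrightarrow> y \<in> {c..d} \<Longrightarrow>
      ((\<lambda>y. P (x,y)) has_vector_derivative Py (x,y)) (at y within {c..d})"
  shows "integral (cbox (a,c) (b,d)) (\<lambda>z. Qx z - Py z) =
    integral {c..d} (\<lambda>y. Q (b,y) - Q (a,y)) - integral {a..b} (\<lambda>x. P (x,d) - P (x,c))"
  using integral_diff[OF integrable_continuous[OF cont(1)] integrable_continuous[OF cont(2)]]
    integral_rectangle_vector_derivative_fst[OF \<open>a \<le> b\<close> cont(1) Q]
    integral_rectangle_vector_derivative_snd[OF \<open>c \<le> d\<close> cont(2) P]
  by simp

lemma dist_le_if_mem_square:
  assumes "z \<in> cbox (p - (d,d)) (p + (d,d))"
  shows "dist z p \<le> 2 * d"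
proof -
  have "\<bar>fst z - fst p\<bar> \<le> d" "\<bar>snd z - snd p\<bar> \<le> d"
    using assms by (cases z, cases p, auto simp: cbox_Pair_eq)+
  then show ?thesis
    using sqrt_sum_squares_le_sum_abs[of "fst z - fst p" "snd z - snd p"]
    by (cases z, cases p) (simp add: dist_Pair_Pair dist_real_def)
qed

lemma eq_0_if_has_integral_0_small_squares:
  fixes h :: "real \<times> real \<Rightarrow> 'a::banach"
  assumes h: "continuous (at p) h"
    and squares: "\<forall>\<^sub>F d in at_right 0. (h has_integral 0) (cbox (p - (d,d)) (p + (d,d)))"
  shows "h p = 0"
proof (rule ccontr)
  assume "h p \<noteq> 0"
  define e where "e = norm (h p) / 2"
  have "e > 0" using \<open>h p \<noteq> 0\<close> by (simp add: e_def)
  with h obtain \<delta> where "\<delta> > 0" and \<delta>: "\<And>z. dist z p < \<delta> \<Longrightarrow> dist (h z) (h p) < e"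
    unfolding continuous_at_eps_delta by blast
  from squares obtain b where "b > 0"
    and b: "\<And>d. 0 < d \<Longrightarrow> d < b \<Longrightarrow> (h has_integral 0) (cbox (p - (d,d)) (p + (d,d)))"
    unfolding eventually_at_right_field by auto
  define d where "d = min b \<delta> / 3"
  define C where "C = cbox (p - (d,d)) (p + (d,d))"
  have "d > 0" "d < b" "2 * d < \<delta>" using \<open>b > 0\<close> \<open>\<delta> > 0\<close> by (auto simp: d_def)
  have near: "norm (h z - h p) \<le> e" if "z \<in> C" for z
    using \<delta>[of z] dist_le_if_mem_square[of z p d] that \<open>2 * d < \<delta>\<close> by (simp add: C_def dist_norm)
  have "measure lborel C = (2 * d)\<^sup>2"
    using \<open>d > 0\<close> by (cases p) (simp add: C_def content_Pair power2_eq_square)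
  have "((\<lambda>z. h z - h p) has_integral (0 - measure lborel C *\<^sub>R h p)) C"
    using b[OF \<open>d > 0\<close> \<open>d < b\<close>] by (intro has_integral_diff) (auto simp: C_def)
  from has_integral_bound[OF _ this[unfolded C_def] near[unfolded C_def]]
  have "norm (measure lborel C *\<^sub>R h p) \<le> e * measure lborel C"
    using \<open>e > 0\<close> by (simp add: C_def)
  then show False
    using \<open>e > 0\<close> \<open>d > 0\<close> \<open>measure lborel C = _\<close> by (simp add: e_def)
qed

lemma has_integral_mixed_partials_diff_rectangle:
  fixes f fx fy fxy fyx :: "real \<times> real \<Rightarrow> 'a::banach"
  assumes "a \<le> b" "c \<le> d"
    and f: "\<And>z. z \<in> cbox (a,c) (b,d) \<Longrightarrow> (f has_derivative (\<lambda>v. fst v *\<^sub>R fx z + snd v *\<^sub>R fy z)) (at z)"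
    and fx: "\<And>z. z \<in> cbox (a,c) (b,d) \<Longrightarrow> ((\<lambda>t. fx (fst z, t)) has_vector_derivative fxy z) (at (snd z))"
    and fy: "\<And>z. z \<in> cbox (a,c) (b,d) \<Longrightarrow> ((\<lambda>t. fy (t, snd z)) has_vector_derivative fyx z) (at (fst z))"
    and cont: "continuous_on (cbox (a,c) (b,d)) fxy" "continuous_on (cbox (a,c) (b,d)) fyx"
  shows "((\<lambda>z. fyx z - fxy z) has_integral 0) (cbox (a,c) (b,d))"
proof -
  have Q: "(x,y) \<in> cbox (a,c) (b,d) \<longleftrightarrow> x \<in> {a..b} \<and> y \<in> {c..d}" for x y
    by (simp add: cbox_Pair_eq)
  have f_line: "((\<lambda>x. f (x,y)) has_vector_derivative fx (x,y)) (at x within X)"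
    "((\<lambda>y. f (x,y)) has_vector_derivative fy (x,y)) (at y within Y)"
    if "x \<in> {a..b}" "y \<in> {c..d}" for x y X Y
  proof -
    have z: "(x,y) \<in> cbox (a,c) (b,d)"
      using that by (simp add: Q)
    have "((\<lambda>x. (x,y)) has_derivative (\<lambda>h. (h,0))) (at x within X)"
      by (auto intro!: derivative_eq_intros)
    from has_derivative_compose[OF this f[OF z]]
    show "((\<lambda>x. f (x,y)) has_vector_derivative fx (x,y)) (at x within X)"
      by (simp add: has_vector_derivative_def)
    have "((\<lambda>y. (x,y)) has_derivative (\<lambda>h. (0,h))) (at y within Y)"
      by (auto intro!: derivative_eq_intros)
    from has_derivative_compose[OF this f[OF z]]
    show "((\<lambda>y. f (x,y)) has_vector_derivative fy (x,y)) (at y within Y)"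
      by (simp add: has_vector_derivative_def)
  qed
  have "((\<lambda>y. fy (x,y)) has_integral f (x,d) - f (x,c)) {c..d}" if "x \<in> {a..b}" for x
    by (rule fundamental_theorem_of_calculus[OF \<open>c \<le> d\<close> f_line(2)[OF that]])
  from has_integral_diff[OF this[of b] this[of a]] \<open>a \<le> b\<close>
  have vertical: "integral {c..d} (\<lambda>y. fy (b,y) - fy (a,y)) = (f (b,d) - f (b,c)) - (f (a,d) - f (a,c))"
    by (simp add: integral_unique)
  have "((\<lambda>x. fx (x,y)) has_integral f (b,y) - f (a,y)) {a..b}" if "y \<in> {c..d}" for y
    by (rule fundamental_theorem_of_calculus[OF \<open>a \<le> b\<close> f_line(1)[OF _ that]])
  from has_integral_diff[OF this[of d] this[of c]] \<open>c \<le> d\<close>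
  have horizontal: "integral {a..b} (\<lambda>x. fx (x,d) - fx (x,c)) = (f (b,d) - f (a,d)) - (f (b,c) - f (a,c))"
    by (simp add: integral_unique)
  have "integral (cbox (a,c) (b,d)) (\<lambda>z. fyx z - fxy z) =
      integral {c..d} (\<lambda>y. fy (b,y) - fy (a,y)) - integral {a..b} (\<lambda>x. fx (x,d) - fx (x,c))"
    by (rule green_rectangle[OF assms(1,2) cont(2,1), where P=fx and Q=fy])
       (use fx fy in \<open>auto simp: Q has_vector_derivative_at_within\<close>)
  then have "integral (cbox (a,c) (b,d)) (\<lambda>z. fyx z - fxy z) = 0"
    unfolding vertical horizontal by (simp add: algebra_simps)
  moreover have "(\<lambda>z. fyx z - fxy z) integrable_on cbox (a,c) (b,d)"
    using cont by (intro integrable_continuous continuous_on_diff)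
  ultimately show ?thesis
    by (metis integrable_integral)
qed

lemma mixed_partials_eq:
  fixes f fx fy fxy fyx :: "real \<times> real \<Rightarrow> 'a::banach"
  assumes U: "open U" "p \<in> U"
    and f: "\<And>z. z \<in> U \<Longrightarrow> (f has_derivative (\<lambda>v. fst v *\<^sub>R fx z + snd v *\<^sub>R fy z)) (at z)"
    and fx: "\<And>z. z \<in> U \<Longrightarrow> ((\<lambda>t. fx (fst z, t)) has_vector_derivative fxy z) (at (snd z))"
    and fy: "\<And>z. z \<in> U \<Longrightarrow> ((\<lambda>t. fy (t, snd z)) has_vector_derivative fyx z) (at (fst z))"
    and cont: "continuous_on U fxy" "continuous_on U fyx"
  shows "fxy p = fyx p"
proof -
  obtain e where "e > 0" "ball p e \<subseteq> U"
    using U open_contains_ball by blast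
  have "((\<lambda>z. fyx z - fxy z) has_integral 0) (cbox (p - (d,d)) (p + (d,d)))"
    if "0 < d" "d < e / 2" for d
  proof -
    have sub: "cbox (p - (d,d)) (p + (d,d)) \<subseteq> U"
      using dist_le_if_mem_square[of _ p d] that \<open>ball p e \<subseteq> U\<close> by (force simp: dist_commute)
    obtain a c where "p = (a,c)" by fastforce
    then have square: "cbox (p - (d,d)) (p + (d,d)) = cbox (a - d, c - d) (a + d, c + d)"
      by simp
    show ?thesis
      unfolding square
      by (rule has_integral_mixed_partials_diff_rectangle[where f=f and fx=fx and fy=fy])
         (use that sub[unfolded square] f fx fy cont in \<open>auto intro: continuous_on_subset\<close>)
  qed
  then have "(\<lambda>z. fyx z - fxy z) p = 0"
    using \<open>e > 0\<close> cont U
    by (intro eq_0_if_has_integral_0_small_squares continuous_diff)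
       (auto simp: continuous_on_eq_continuous_at eventually_at_right_field intro!: exI[of _ "e / 2"])
  then show ?thesis by simp
qed

lemma frechet_derivative_directional_commute:
  fixes f :: "'a::real_normed_vector \<Rightarrow> 'b::banach" and u v :: 'a
  defines "Du \<equiv> \<lambda>x. frechet_derivative f (at x) u" and "Dv \<equiv> \<lambda>x. frechet_derivative f (at x) v"
  assumes S: "open S" "p \<in> S"
    and f: "\<And>q. q \<in> S \<Longrightarrow> f differentiable (at q)"
    and Du: "\<And>q. q \<in> S \<Longrightarrow> Du differentiable (at q)"
    and Dv: "\<And>q. q \<in> S \<Longrightarrow> Dv differentiable (at q)"
    and cont: "continuous_on S (\<lambda>x. frechet_derivative Du (at x) v)"
      "continuous_on S (\<lambda>x. frechet_derivative Dv (at x) u)"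
  shows "frechet_derivative Du (at p) v = frechet_derivative Dv (at p) u"
proof -
  define \<gamma> where "\<gamma> z = p + fst z *\<^sub>R u + snd z *\<^sub>R v" for z :: "real \<times> real"
  define U where "U = \<gamma> -` S"
  have cont_\<gamma>: "continuous_on UNIV \<gamma>"
    unfolding \<gamma>_def by (intro continuous_intros)
  have "open U"
    unfolding U_def using open_vimage[OF S(1) cont_\<gamma>] by simp
  have lin: "linear (frechet_derivative g (at q))" if "g differentiable (at q)" for g :: "'a \<Rightarrow> 'b" and q
    using has_derivative_linear[OF frechet_derivative_works[THEN iffD1, OF that]] .
  have line: "((\<lambda>t. g (\<gamma> (s, t))) has_vector_derivative frechet_derivative g (at (\<gamma> (s,t))) v) (at t)"
    "((\<lambda>s. g (\<gamma> (s, t))) has_vector_derivative frechet_derivative g (at (\<gamma> (s,t))) u) (at s)"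
    if "g differentiable (at (\<gamma> (s,t)))" for g :: "'a \<Rightarrow> 'b" and s t
  proof -
    have "((\<lambda>t. \<gamma> (s, t)) has_derivative (\<lambda>h. h *\<^sub>R v)) (at t)"
      "((\<lambda>s. \<gamma> (s, t)) has_derivative (\<lambda>h. h *\<^sub>R u)) (at s)"
      unfolding \<gamma>_def by (auto intro!: derivative_eq_intros)
    from this[THEN has_derivative_compose, OF frechet_derivative_works[THEN iffD1, OF that]]
    show "((\<lambda>t. g (\<gamma> (s, t))) has_vector_derivative frechet_derivative g (at (\<gamma> (s,t))) v) (at t)"
      "((\<lambda>s. g (\<gamma> (s, t))) has_vector_derivative frechet_derivative g (at (\<gamma> (s,t))) u) (at s)"
      by (simp_all add: has_vector_derivative_def linear_cmul[OF lin[OF that]])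
  qed
  have "frechet_derivative Du (at (\<gamma> (0,0))) v = frechet_derivative Dv (at (\<gamma> (0,0))) u"
  proof (rule mixed_partials_eq[OF \<open>open U\<close>, where f="\<lambda>z. f (\<gamma> z)" and fx="\<lambda>z. Du (\<gamma> z)"
        and fy="\<lambda>z. Dv (\<gamma> z)"])
    show "(0,0) \<in> U"
      using S(2) by (simp add: U_def \<gamma>_def)
    fix z assume "z \<in> U"
    then have z: "\<gamma> z \<in> S" by (simp add: U_def)
    have "(\<gamma> has_derivative (\<lambda>w. fst w *\<^sub>R u + snd w *\<^sub>R v)) (at z)"
      unfolding \<gamma>_def by (auto intro!: derivative_eq_intros)
    from has_derivative_compose[OF this frechet_derivative_works[THEN iffD1, OF f[OF z]]]
    show "((\<lambda>z. f (\<gamma> z)) has_derivative (\<lambda>w. fst w *\<^sub>R Du (\<gamma> z) + snd w *\<^sub>R Dv (\<gamma> z))) (at z)"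
      by (simp add: Du_def Dv_def linear_add[OF lin[OF f[OF z]]] linear_cmul[OF lin[OF f[OF z]]])
    show "((\<lambda>t. Du (\<gamma> (fst z, t))) has_vector_derivative frechet_derivative Du (at (\<gamma> z)) v) (at (snd z))"
      using line(1)[of Du "fst z" "snd z"] Du[OF z] by simp
    show "((\<lambda>t. Dv (\<gamma> (t, snd z))) has_vector_derivative frechet_derivative Dv (at (\<gamma> z)) u) (at (fst z))"
      using line(2)[of Dv "fst z" "snd z"] Dv[OF z] by simp
  next
    show "continuous_on U (\<lambda>z. frechet_derivative Du (at (\<gamma> z)) v)"
      "continuous_on U (\<lambda>z. frechet_derivative Dv (at (\<gamma> z)) u)"
      using cont by (auto simp: U_def intro!: continuous_on_compose2[OF _ continuous_on_subset[OF cont_\<gamma>]])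
  qed
  then show ?thesis
    by (simp add: \<gamma>_def)
qed

section \<open>Green's theorem on a disc\<close>

lemma has_real_derivative_comp_polar:
  fixes P :: "real \<times> real \<Rightarrow> real"
  assumes "(P has_derivative (\<lambda>v. fst v * a + snd v * b)) (at (polar (\<rho>,\<theta>)))"
  shows "((\<lambda>t. P (polar (t,\<theta>))) has_real_derivative cos \<theta> * a + sin \<theta> * b) (at \<rho> within X)"
    and "((\<lambda>t. P (polar (\<rho>,t))) has_real_derivative - \<rho> * sin \<theta> * a + \<rho> * cos \<theta> * b) (at \<theta> within X)"
proof -
  have "((\<lambda>t. polar (t,\<theta>)) has_derivative (\<lambda>h. (h * cos \<theta>, h * sin \<theta>))) (at \<rho> within X)"
    "((\<lambda>t. polar (\<rho>,t)) has_derivative (\<lambda>h. (- h * \<rho> * sin \<theta>, h * \<rho> * cos \<theta>))) (at \<theta> within X)"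
    by (auto simp: polar_def intro!: derivative_eq_intros)
  from this[THEN has_derivative_compose, OF assms]
  show "((\<lambda>t. P (polar (t,\<theta>))) has_real_derivative cos \<theta> * a + sin \<theta> * b) (at \<rho> within X)"
    "((\<lambda>t. P (polar (\<rho>,t))) has_real_derivative - \<rho> * sin \<theta> * a + \<rho> * cos \<theta> * b) (at \<theta> within X)"
    unfolding has_field_derivative_def
    by (auto elim!: has_derivative_eq_rhs simp: fun_eq_iff algebra_simps)
qed

lemma continuous_on_comp_polar:
  assumes "continuous_on U g" "cball 0 r \<subseteq> U"
  shows "continuous_on (cbox (0,0) (r,b)) (\<lambda>p. g (polar p))"
proof -
  have "continuous_on UNIV polar"
    unfolding polar_def by (intro continuous_intros)
  then show ?thesis
    by (rule continuous_on_compose2[OF assms(1) continuous_on_subset])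
       (use assms(2) in \<open>auto simp: norm_polar cbox_Pair_eq\<close>)
qed

lemma green_disc:
  fixes P1 P2 a1 a2 b1 b2 :: "real \<times> real \<Rightarrow> real"
  assumes U: "open U" "cball 0 r \<subseteq> U" and "0 < r"
    and P1: "\<And>y. y \<in> U \<Longrightarrow> (P1 has_derivative (\<lambda>v. fst v * a1 y + snd v * a2 y)) (at y)"
    and P2: "\<And>y. y \<in> U \<Longrightarrow> (P2 has_derivative (\<lambda>v. fst v * b1 y + snd v * b2 y)) (at y)"
    and cont: "continuous_on U a1" "continuous_on U a2" "continuous_on U b1" "continuous_on U b2"
  shows "integral (ball 0 r) (\<lambda>y. b1 y - a2 y) =
    integral {0..2*pi} (\<lambda>\<theta>. (- sin \<theta> * P1 (r * cos \<theta>, r * sin \<theta>) + cos \<theta> * P2 (r * cos \<theta>, r * sin \<theta>)) * r)"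
proof -
  have cont_P: "continuous_on U P1" "continuous_on U P2"
    using P1 P2 by (auto intro!: continuous_at_imp_continuous_on has_derivative_continuous)
  define B where "B = cbox (0::real,0::real) (r,2*pi)"
  \<comment> \<open>Green's theorem in polar coordinates: the pulled-back 1-form is \<open>Y d\<rho> + X d\<theta>\<close>\<close>
  define X where "X p = fst p * (- sin (snd p) * P1 (polar p) + cos (snd p) * P2 (polar p))" for p
  define Y where "Y p = cos (snd p) * P1 (polar p) + sin (snd p) * P2 (polar p)" for p
  define X\<rho> where "X\<rho> p = (- sin (snd p) * P1 (polar p) + cos (snd p) * P2 (polar p))
     + fst p * (- sin (snd p) * (cos (snd p) * a1 (polar p) + sin (snd p) * a2 (polar p))
                + cos (snd p) * (cos (snd p) * b1 (polar p) + sin (snd p) * b2 (polar p)))" for p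
  define Y\<theta> where "Y\<theta> p = (- sin (snd p) * P1 (polar p) + cos (snd p) * P2 (polar p))
     + cos (snd p) * (- fst p * sin (snd p) * a1 (polar p) + fst p * cos (snd p) * a2 (polar p))
     + sin (snd p) * (- fst p * sin (snd p) * b1 (polar p) + fst p * cos (snd p) * b2 (polar p))" for p
  have "X\<rho> p - Y\<theta> p = fst p * (b1 (polar p) - a2 (polar p))" for p
  proof -
    have "sin (snd p) * sin (snd p) + cos (snd p) * cos (snd p) = 1"
      by (simp flip: power2_eq_square)
    then show ?thesis
      unfolding X\<rho>_def Y\<theta>_def by algebra
  qed
  then have "integral B (\<lambda>p. X\<rho> p - Y\<theta> p) = integral (ball 0 r) (\<lambda>y. b1 y - a2 y)"
    using integral_ball_polar[of r "\<lambda>y. b1 y - a2 y"] cont(2,3) U(2)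
    by (simp add: B_def continuous_on_diff continuous_on_subset)
  moreover have "integral B (\<lambda>p. X\<rho> p - Y\<theta> p) =
    integral {0..2*pi} (\<lambda>\<theta>. X (r,\<theta>) - X (0,\<theta>)) - integral {0..r} (\<lambda>\<rho>. Y (\<rho>,2*pi) - Y (\<rho>,0))"
    unfolding B_def
  proof (rule green_rectangle[where P=Y and Q=X])
    show "continuous_on (cbox (0,0) (r,2*pi)) X\<rho>" "continuous_on (cbox (0,0) (r,2*pi)) Y\<theta>"
      unfolding X\<rho>_def[abs_def] Y\<theta>_def[abs_def]
      by (intro continuous_intros continuous_on_comp_polar[OF _ U(2)] cont cont_P)+
    fix \<rho> \<theta> assume "\<rho> \<in> {0..r}" "\<theta> \<in> {0..2*pi}"
    then have "polar (\<rho>,\<theta>) \<in> U"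
      using U(2) by (auto simp: norm_polar)
    note P1' = has_real_derivative_comp_polar[OF P1[OF this]]
      and P2' = has_real_derivative_comp_polar[OF P2[OF this]]
    show "((\<lambda>\<rho>. X (\<rho>,\<theta>)) has_vector_derivative X\<rho> (\<rho>,\<theta>)) (at \<rho> within {0..r})"
      unfolding has_real_derivative_iff_has_vector_derivative[symmetric] X_def X\<rho>_def fst_conv snd_conv
      by (auto intro!: derivative_eq_intros P1'(1) P2'(1) simp: algebra_simps)
    show "((\<lambda>\<theta>. Y (\<rho>,\<theta>)) has_vector_derivative Y\<theta> (\<rho>,\<theta>)) (at \<theta> within {0..2*pi})"
      unfolding has_real_derivative_iff_has_vector_derivative[symmetric] Y_def Y\<theta>_def fst_conv snd_conv
      by (auto intro!: derivative_eq_intros P1'(2) P2'(2) simp: algebra_simps)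
  qed (use \<open>0 < r\<close> in auto)
  moreover have "X (0,\<theta>) = 0" "Y (\<rho>,2*pi) = Y (\<rho>,0)" for \<rho> \<theta>
    by (simp_all add: X_def Y_def polar_def)
  ultimately show ?thesis
    by (simp add: X_def polar_def mult.commute)
qed

lemma pd3_eq:
  assumes "(f has_derivative f') (at p)"
  shows "pd3 a f p = f' (evec3 a)"
  using frechet_derivative_at[OF assms] by (simp add: pd3_def)

lemma pd2_eq:
  assumes "(f has_derivative f') (at p)"
  shows "pd2 a f p = f' (evec2 a)"
  using frechet_derivative_at[OF assms] by (simp add: pd2_def)

lemma has_derivative_pd3:
  fixes f :: "pt3 \<Rightarrow> 'b::real_normed_vector"
  assumes "f differentiable (at p)"
  shows "(f has_derivative (\<lambda>v. fst v *\<^sub>R pd3 0 f p + fst (snd v) *\<^sub>R pd3 1 f p + snd (snd v) *\<^sub>R pd3 2 f p)) (at p)"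
proof -
  have f': "(f has_derivative frechet_derivative f (at p)) (at p)"
    using assms by (simp add: frechet_derivative_works)
  have v: "v = fst v *\<^sub>R evec3 0 + fst (snd v) *\<^sub>R evec3 1 + snd (snd v) *\<^sub>R evec3 2" for v
    by (cases v) (simp add: evec3_def)
  note lin = has_derivative_linear[OF f']
  have "frechet_derivative f (at p) =
      (\<lambda>v. fst v *\<^sub>R pd3 0 f p + fst (snd v) *\<^sub>R pd3 1 f p + snd (snd v) *\<^sub>R pd3 2 f p)"
    by (rule ext, subst v) (simp add: linear_add[OF lin] linear_cmul[OF lin] pd3_def)
  with f' show ?thesis
    by simp
qed

lemma pd3_diff:
  assumes "f differentiable (at p)" "g differentiable (at p)"
  shows "pd3 a (\<lambda>p. f p - g p) p = pd3 a f p - pd3 a g p"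
  using pd3_eq[OF has_derivative_diff[OF assms[unfolded frechet_derivative_works]]]
  by (simp add: pd3_def)

lemma pd2_slice:
  assumes "f differentiable (at (s,y))" "a \<in> {1,2}"
  shows "pd2 a (\<lambda>y. f (s,y)) y = pd3 a f (s,y)"
proof -
  have "((\<lambda>y. (s,y)) has_derivative (\<lambda>v. (0,v))) (at y)"
    by (auto intro!: derivative_eq_intros)
  from has_derivative_compose[OF this assms(1)[unfolded frechet_derivative_works]]
  have "pd2 a (\<lambda>y. f (s,y)) y = frechet_derivative f (at (s,y)) (0, evec2 a)"
    by (rule pd2_eq)
  also have "(0::real, evec2 a) = evec3 a"
    using assms(2) by (auto simp: evec2_def evec3_def)
  finally show ?thesis
    by (simp add: pd3_def)
qed

lemma pd3_eta: "pd3 c f = (\<lambda>p. frechet_derivative f (at p) (evec3 c))"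
  by (simp add: fun_eq_iff pd3_def)

definition vorticity_potential :: "config3 \<Rightarrow> nat \<Rightarrow> pt3 \<Rightarrow> real" where
  "vorticity_potential U a p = rinner (\<i> * fst U p) (cov3 U a p) + snd U a p"

lemma rinner_eq_inner: "rinner x y = inner x y"
  by (simp add: rinner_def inner_complex_def)

lemma has_derivative_vorticity_potential:
  fixes \<phi> :: "pt3 \<Rightarrow> complex" and A :: "nat \<Rightarrow> pt3 \<Rightarrow> real"
  assumes "\<phi> differentiable (at p)" "pd3 a \<phi> differentiable (at p)" "A a differentiable (at p)"
  shows "(vorticity_potential (\<phi>,A) a has_derivative (\<lambda>v.
      rinner (\<i> * frechet_derivative \<phi> (at p) v) (cov3 (\<phi>,A) a p)
    + rinner (\<i> * \<phi> p) (frechet_derivative (pd3 a \<phi>) (at p) v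
        - \<i> * complex_of_real (frechet_derivative (A a) (at p) v) * \<phi> p
        - \<i> * complex_of_real (A a p) * frechet_derivative \<phi> (at p) v)
    + frechet_derivative (A a) (at p) v)) (at p)"
proof -
  note assms[unfolded frechet_derivative_works]
  have "((\<lambda>p. inner (\<i> * \<phi> p) (pd3 a \<phi> p - \<i> * complex_of_real (A a p) * \<phi> p) + A a p) has_derivative
      (\<lambda>v. rinner (\<i> * frechet_derivative \<phi> (at p) v) (cov3 (\<phi>,A) a p)
        + rinner (\<i> * \<phi> p) (frechet_derivative (pd3 a \<phi>) (at p) v
            - \<i> * complex_of_real (frechet_derivative (A a) (at p) v) * \<phi> p
            - \<i> * complex_of_real (A a p) * frechet_derivative \<phi> (at p) v)
        + frechet_derivative (A a) (at p) v)) (at p)"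
    by (rule derivative_eq_intros \<open>(\<phi> has_derivative _) _\<close> \<open>(pd3 a \<phi> has_derivative _) _\<close>
          \<open>(A a has_derivative _) _\<close> refl | simp)+
       (simp add: fun_eq_iff rinner_eq_inner cov3_def algebra_simps inner_diff_right inner_add_right)
  moreover have "vorticity_potential (\<phi>,A) a =
      (\<lambda>p. inner (\<i> * \<phi> p) (pd3 a \<phi> p - \<i> * complex_of_real (A a p) * \<phi> p) + A a p)"
    by (simp add: fun_eq_iff vorticity_potential_def cov3_def rinner_eq_inner)
  ultimately show ?thesis
    by simp
qed

lemma differentiable_vorticity_potential:
  assumes "\<phi> differentiable (at p)" "pd3 a \<phi> differentiable (at p)" "A a differentiable (at p)"
  shows "vorticity_potential (\<phi>,A) a differentiable (at p)"
  using has_derivative_vorticity_potential[of \<phi> p a A, OF assms] by (rule differentiableI)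

lemma pd3_vorticity_potential:
  assumes "\<phi> differentiable (at p)" "pd3 a \<phi> differentiable (at p)" "A a differentiable (at p)"
  shows "pd3 b (vorticity_potential (\<phi>,A) a) p = rinner (\<i> * pd3 b \<phi> p) (cov3 (\<phi>,A) a p)
     + rinner (\<i> * \<phi> p) (pd3 b (pd3 a \<phi>) p - \<i> * complex_of_real (pd3 b (A a) p) * \<phi> p
          - \<i> * complex_of_real (A a p) * pd3 b \<phi> p) + pd3 b (A a) p"
  using pd3_eq[OF has_derivative_vorticity_potential[of \<phi> p a A, OF assms], of b] by (simp add: pd3_def)

lemma time_curl_vorticity_potential:
  fixes \<phi> :: "pt3 \<Rightarrow> complex" and A :: "nat \<Rightarrow> pt3 \<Rightarrow> real"
  assumes "\<phi> differentiable (at p)" "\<And>c. pd3 c \<phi> differentiable (at p)"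
    and "A 0 differentiable (at p)" "A a differentiable (at p)"
    and "pd3 a (pd3 0 \<phi>) p = pd3 0 (pd3 a \<phi>) p"
  shows "(pd3 0 (vorticity_potential (\<phi>,A) a) p - pd3 a (vorticity_potential (\<phi>,A) 0) p) / 2 =
    rinner (\<i> * cov3 (\<phi>,A) 0 p) (cov3 (\<phi>,A) a p) + curv3 (\<phi>,A) 0 a p * (1 - (cmod (\<phi> p))\<^sup>2) / 2"
  unfolding pd3_vorticity_potential[of \<phi> p a A, OF assms(1,2,4)]
    pd3_vorticity_potential[of \<phi> p 0 A, OF assms(1,2,3)] assms(5)
    cmod_power2
  by (simp add: rinner_def cov3_def curv3_def power2_eq_square field_simps)

lemma abs_rinner_le: "\<bar>rinner x y\<bar> \<le> cmod x * cmod y"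
  unfolding rinner_def by (metis abs_Re_le_cmod complex_mod_cnj norm_mult)

lemma rotated_component_square_le:
  fixes a b c s :: real
  assumes "c\<^sup>2 + s\<^sup>2 = 1"
  shows "(- s * a + c * b)\<^sup>2 \<le> a\<^sup>2 + b\<^sup>2"
proof -
  have "a\<^sup>2 + b\<^sup>2 - (- s * a + c * b)\<^sup>2 = (a\<^sup>2 + b\<^sup>2) * (c\<^sup>2 + s\<^sup>2) - (- s * a + c * b)\<^sup>2"
    using assms by simp
  also have "\<dots> = (c * a + s * b)\<^sup>2"
    by (simp add: power2_eq_square algebra_simps)
  finally show ?thesis
    by (metis diff_ge_0_iff_ge zero_le_power2)
qed

lemma abs_rinner_rotated_le:
  fixes D0 D1 D2 :: complex and c s :: real
  assumes "c\<^sup>2 + s\<^sup>2 = 1"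
  shows "\<bar>rinner (\<i> * D0) (- complex_of_real s * D1 + complex_of_real c * D2)\<bar>
    \<le> ((cmod D0)\<^sup>2 + (cmod D1)\<^sup>2 + (cmod D2)\<^sup>2) / 2"
proof -
  define D where "D = - complex_of_real s * D1 + complex_of_real c * D2"
  have "cmod D \<le> \<bar>s\<bar> * cmod D1 + \<bar>c\<bar> * cmod D2"
    unfolding D_def by (rule order_trans[OF norm_triangle_ineq]) (simp add: norm_mult)
  then have "(cmod D)\<^sup>2 \<le> (- (- \<bar>s\<bar>) * cmod D1 + \<bar>c\<bar> * cmod D2)\<^sup>2"
    by (simp add: power_mono)
  also have "\<dots> \<le> (cmod D1)\<^sup>2 + (cmod D2)\<^sup>2"
    by (rule rotated_component_square_le) (simp add: assms)
  finally have D: "(cmod D)\<^sup>2 \<le> (cmod D1)\<^sup>2 + (cmod D2)\<^sup>2" .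
  have "\<bar>rinner (\<i> * D0) D\<bar> \<le> ((cmod D0)\<^sup>2 + (cmod D)\<^sup>2) / 2"
    using abs_rinner_le[of "\<i> * D0" D] sum_squares_bound[of "cmod D0" "cmod D"]
    by (simp add: norm_mult)
  also have "\<dots> \<le> ((cmod D0)\<^sup>2 + (cmod D1)\<^sup>2 + (cmod D2)\<^sup>2) / 2"
    using D by simp
  finally show ?thesis
    by (simp add: D_def)
qed

lemma abs_mult_le_young:
  fixes F m \<epsilon> :: real
  assumes "\<epsilon> > 0"
  shows "\<bar>F * (1 - m) / 2\<bar> \<le> \<epsilon>\<^sup>2 / 2 * F\<^sup>2 + (m - 1)\<^sup>2 / (8 * \<epsilon>\<^sup>2)"
proof -
  have "0 \<le> (\<epsilon> * \<bar>F\<bar> - \<bar>1 - m\<bar> / (2 * \<epsilon>))\<^sup>2"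
    by simp
  also have "\<dots> = \<epsilon>\<^sup>2 * F\<^sup>2 - \<bar>F\<bar> * \<bar>1 - m\<bar> + (m - 1)\<^sup>2 / (4 * \<epsilon>\<^sup>2)"
    using assms by (simp add: power2_eq_square field_simps)
  finally have "\<bar>F\<bar> * \<bar>1 - m\<bar> \<le> \<epsilon>\<^sup>2 * F\<^sup>2 + (m - 1)\<^sup>2 / (4 * \<epsilon>\<^sup>2)"
    by simp
  then have "\<bar>F\<bar> * \<bar>1 - m\<bar> / 2 \<le> (\<epsilon>\<^sup>2 * F\<^sup>2 + (m - 1)\<^sup>2 / (4 * \<epsilon>\<^sup>2)) / 2"
    by simp
  also have "\<dots> = \<epsilon>\<^sup>2 / 2 * F\<^sup>2 + (m - 1)\<^sup>2 / (8 * \<epsilon>\<^sup>2)"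
    by (simp add: field_simps)
  finally show ?thesis
    by (simp add: abs_mult)
qed

lemma flux_density_le_e3d:
  fixes U :: config3 and p :: pt3 and \<theta> \<epsilon> lam :: real
  assumes "\<epsilon> > 0" "lam > 0"
  defines "D \<equiv> \<lambda>a. cov3 U a p" and "F \<equiv> \<lambda>a b. curv3 U a b p" and "m \<equiv> (cmod (fst U p))\<^sup>2"
  shows "\<bar>- sin \<theta> * (rinner (\<i> * D 0) (D 1) + F 0 1 * (1 - m) / 2)
          + cos \<theta> * (rinner (\<i> * D 0) (D 2) + F 0 2 * (1 - m) / 2)\<bar>
    \<le> max 1 (1 / lam) * e3d \<epsilon> lam U p"
proof -
  define Dt where "Dt = - complex_of_real (sin \<theta>) * D 1 + complex_of_real (cos \<theta>) * D 2"
  define Ft where "Ft = - sin \<theta> * F 0 1 + cos \<theta> * F 0 2"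
  define X where "X = ((cmod (D 0))\<^sup>2 + (cmod (D 1))\<^sup>2 + (cmod (D 2))\<^sup>2) / 2
      + \<epsilon>\<^sup>2 / 2 * ((F 0 1)\<^sup>2 + (F 0 2)\<^sup>2 + (F 1 2)\<^sup>2)"
  define Y where "Y = lam / (8 * \<epsilon>\<^sup>2) * (m - 1)\<^sup>2"
  have current: "\<bar>rinner (\<i> * D 0) Dt\<bar> \<le> ((cmod (D 0))\<^sup>2 + (cmod (D 1))\<^sup>2 + (cmod (D 2))\<^sup>2) / 2"
    unfolding Dt_def by (rule abs_rinner_rotated_le) simp
  have potential: "\<bar>Ft * (1 - m) / 2\<bar> \<le> \<epsilon>\<^sup>2 / 2 * ((F 0 1)\<^sup>2 + (F 0 2)\<^sup>2 + (F 1 2)\<^sup>2) + 1 / lam * Y"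
  proof -
    have "Ft\<^sup>2 \<le> (F 0 1)\<^sup>2 + (F 0 2)\<^sup>2"
      unfolding Ft_def by (rule rotated_component_square_le) simp
    then have "Ft\<^sup>2 \<le> (F 0 1)\<^sup>2 + (F 0 2)\<^sup>2 + (F 1 2)\<^sup>2"
      using zero_le_power2[of "F 1 2"] by linarith
    then have "\<epsilon>\<^sup>2 / 2 * Ft\<^sup>2 \<le> \<epsilon>\<^sup>2 / 2 * ((F 0 1)\<^sup>2 + (F 0 2)\<^sup>2 + (F 1 2)\<^sup>2)"
      by (rule mult_left_mono) simp
    then show ?thesis
      using abs_mult_le_young[OF \<open>\<epsilon> > 0\<close>, of Ft m] \<open>lam > 0\<close> by (simp add: Y_def)
  qed
  have rotate: "- sin \<theta> * (rinner (\<i> * D 0) (D 1) + F 0 1 * (1 - m) / 2)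
      + cos \<theta> * (rinner (\<i> * D 0) (D 2) + F 0 2 * (1 - m) / 2)
      = rinner (\<i> * D 0) Dt + Ft * (1 - m) / 2"
    by (simp add: Dt_def Ft_def rinner_def algebra_simps) (simp add: field_simps)
  have "\<bar>- sin \<theta> * (rinner (\<i> * D 0) (D 1) + F 0 1 * (1 - m) / 2)
          + cos \<theta> * (rinner (\<i> * D 0) (D 2) + F 0 2 * (1 - m) / 2)\<bar> \<le> X + 1 / lam * Y"
    unfolding rotate X_def
    using current potential abs_triangle_ineq[of "rinner (\<i> * D 0) Dt" "Ft * (1 - m) / 2"] by linarith
  also have "\<dots> \<le> max 1 (1 / lam) * (X + Y)"
    using mult_right_mono[OF max.cobounded1[of 1 "1 / lam"], of X]
      mult_right_mono[OF max.cobounded2[of "1 / lam" 1], of Y] \<open>lam > 0\<close>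
    by (simp add: distrib_left X_def Y_def)
  also have "X + Y = e3d \<epsilon> lam U p"
    by (simp add: e3d_def X_def Y_def D_def F_def m_def add.assoc)
  finally show ?thesis .
qed

section \<open>Stokes' theorem on a lateral cylinder\<close>

definition cyl :: "real \<Rightarrow> real \<times> real \<Rightarrow> pt3" where
  "cyl r p = (fst p, r * cos (snd p), r * sin (snd p))"

definition circulation :: "(nat \<Rightarrow> pt3 \<Rightarrow> real) \<Rightarrow> real \<Rightarrow> real \<Rightarrow> real" where
  "circulation Q r s =
     integral {0..2*pi} (\<lambda>\<theta>. (- sin \<theta> * Q 1 (cyl r (s,\<theta>)) + cos \<theta> * Q 2 (cyl r (s,\<theta>))) * r)"

text \<open>
  The pull-back of \<open>dQ\<close> to the parameter rectangle \<open>(s,\<theta>)\<close> of the cylinder, i.e.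
  \<open>r (\<partial>\<^sub>0Q\<^sub>\<tau> - \<partial>\<^sub>\<tau>Q\<^sub>0)\<close> with \<open>\<tau> = (- sin \<theta>, cos \<theta>)\<close> the unit tangent of the circle.
\<close>

definition cylinder_flux :: "(nat \<Rightarrow> pt3 \<Rightarrow> real) \<Rightarrow> real \<Rightarrow> real \<times> real \<Rightarrow> real" where
  "cylinder_flux Q r p =
     r * (- sin (snd p) * (pd3 0 (Q 1) (cyl r p) - pd3 1 (Q 0) (cyl r p))
          + cos (snd p) * (pd3 0 (Q 2) (cyl r p) - pd3 2 (Q 0) (cyl r p)))"

lemma cyl_mem_cylinder: "0 \<le> r \<Longrightarrow> s \<in> I \<Longrightarrow> cyl r (s,\<theta>) \<in> I \<times> cball 0 r"
  using norm_polar[of "(r,\<theta>)"] by (simp add: cyl_def polar_def)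

lemma cyl_integral_eq: "cyl_integral t r f = integral (cbox (0,0) (t,2*pi)) (\<lambda>p. f (cyl r p) * r)"
proof -
  have "{0<..<t} \<times> {0<..<2*pi} = box (0::real,0::real) (t,2*pi)"
    by (simp add: box_Pair_eq)
  then show ?thesis
    by (simp add: cyl_integral_def integral_open_interval case_prod_unfold cyl_def)
qed

lemma continuous_on_comp_cyl:
  assumes "continuous_on S g" "\<And>s \<theta>. s \<in> {0..t} \<Longrightarrow> cyl r (s,\<theta>) \<in> S"
  shows "continuous_on (cbox (0,0) (t,b)) (\<lambda>p. g (cyl r p))"
proof -
  have "continuous_on UNIV (cyl r)"
    unfolding cyl_def by (intro continuous_intros)
  then show ?thesis
    by (rule continuous_on_compose2[OF assms(1) continuous_on_subset]) (auto simp: cbox_Pair_eq assms(2))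
qed

lemma has_real_derivative_comp_cyl:
  fixes Q :: "pt3 \<Rightarrow> real"
  assumes "Q differentiable (at (cyl r (s,\<theta>)))"
  shows "((\<lambda>t. Q (cyl r (t,\<theta>))) has_real_derivative pd3 0 Q (cyl r (s,\<theta>))) (at s within X)"
    and "((\<lambda>t. Q (cyl r (s,t))) has_real_derivative
      r * (- sin \<theta> * pd3 1 Q (cyl r (s,\<theta>)) + cos \<theta> * pd3 2 Q (cyl r (s,\<theta>)))) (at \<theta> within X)"
proof -
  have "((\<lambda>t. cyl r (t,\<theta>)) has_derivative (\<lambda>h. (h, 0, 0))) (at s within X)"
    "((\<lambda>t. cyl r (s,t)) has_derivative (\<lambda>h. (0, - h * r * sin \<theta>, h * r * cos \<theta>))) (at \<theta> within X)"
    by (auto simp: cyl_def zero_prod_def intro!: derivative_eq_intros)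
  from this[THEN has_derivative_compose, OF has_derivative_pd3[OF assms]]
  show "((\<lambda>t. Q (cyl r (t,\<theta>))) has_real_derivative pd3 0 Q (cyl r (s,\<theta>))) (at s within X)"
    "((\<lambda>t. Q (cyl r (s,t))) has_real_derivative
      r * (- sin \<theta> * pd3 1 Q (cyl r (s,\<theta>)) + cos \<theta> * pd3 2 Q (cyl r (s,\<theta>)))) (at \<theta> within X)"
    unfolding has_field_derivative_def
    by (auto elim!: has_derivative_eq_rhs simp: fun_eq_iff algebra_simps)
qed

lemma circulation_diff_eq_integral_cylinder_flux:
  fixes Q :: "nat \<Rightarrow> pt3 \<Rightarrow> real"
  assumes "0 \<le> t"
    and cyl_S: "\<And>s \<theta>. s \<in> {0..t} \<Longrightarrow> cyl r (s,\<theta>) \<in> S"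
    and diff: "\<And>a q. a \<in> {0,1,2} \<Longrightarrow> q \<in> S \<Longrightarrow> Q a differentiable (at q)"
    and cont: "\<And>a b. a \<in> {0,1,2} \<Longrightarrow> continuous_on S (pd3 b (Q a))"
  shows "circulation Q r t - circulation Q r 0 = integral (cbox (0,0) (t,2*pi)) (cylinder_flux Q r)"
proof -
  \<comment> \<open>Green's theorem for the pull-back \<open>Q\<^sub>0(cyl) ds + X d\<theta>\<close> of \<open>Q\<close> to the parameter rectangle\<close>
  define X where "X p = (- sin (snd p) * Q 1 (cyl r p) + cos (snd p) * Q 2 (cyl r p)) * r" for p
  define Xs where "Xs p = r * (- sin (snd p) * pd3 0 (Q 1) (cyl r p) + cos (snd p) * pd3 0 (Q 2) (cyl r p))" for p
  define Y\<theta> where "Y\<theta> p = r * (- sin (snd p) * pd3 1 (Q 0) (cyl r p) + cos (snd p) * pd3 2 (Q 0) (cyl r p))" for p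
  have "integral (cbox (0,0) (t,2*pi)) (\<lambda>p. Xs p - Y\<theta> p) = integral {0..2*pi} (\<lambda>\<theta>. X (t,\<theta>) - X (0,\<theta>))
      - integral {0..t} (\<lambda>s. Q 0 (cyl r (s,2*pi)) - Q 0 (cyl r (s,0)))"
  proof (rule green_rectangle[where P="\<lambda>p. Q 0 (cyl r p)" and Q=X])
    show "continuous_on (cbox (0,0) (t,2*pi)) Xs" "continuous_on (cbox (0,0) (t,2*pi)) Y\<theta>"
      unfolding Xs_def[abs_def] Y\<theta>_def[abs_def]
      by (intro continuous_intros continuous_on_comp_cyl[OF _ cyl_S] cont; simp)+
    fix s \<theta> assume "s \<in> {0..t}" "\<theta> \<in> {0..2*pi}"
    note dQ = has_real_derivative_comp_cyl[OF diff[OF _ cyl_S[OF \<open>s \<in> {0..t}\<close>]]]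
    show "((\<lambda>s. X (s,\<theta>)) has_vector_derivative Xs (s,\<theta>)) (at s within {0..t})"
      unfolding has_real_derivative_iff_has_vector_derivative[symmetric] X_def Xs_def snd_conv
      by (auto intro!: derivative_eq_intros dQ(1) simp: algebra_simps)
    show "((\<lambda>\<theta>. Q 0 (cyl r (s,\<theta>))) has_vector_derivative Y\<theta> (s,\<theta>)) (at \<theta> within {0..2*pi})"
      unfolding has_real_derivative_iff_has_vector_derivative[symmetric] Y\<theta>_def snd_conv
      by (rule dQ(2)) simp
  qed (use \<open>0 \<le> t\<close> in auto)
  also have "\<dots> = circulation Q r t - circulation Q r 0"
  proof -
    have cont_Q: "continuous_on S (Q a)" if "a \<in> {0,1,2}" for a
      using diff[OF that] by (intro differentiable_imp_continuous_on differentiable_at_imp_differentiable_on)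
    have "continuous_on {0..2*pi} (\<lambda>\<theta>. X (s,\<theta>))" if "s \<in> {0..t}" for s
    proof -
      have "continuous_on {0..2*pi} (\<lambda>\<theta>. cyl r (s,\<theta>))"
        unfolding cyl_def by (intro continuous_intros)
      then show ?thesis
        unfolding X_def using cyl_S[OF that]
        by (intro continuous_intros continuous_on_compose2[OF cont_Q]; force)+
    qed
    then show ?thesis
      using \<open>0 \<le> t\<close>
      by (simp add: integral_diff integrable_continuous_real circulation_def X_def cyl_def)
  qed
  finally show ?thesis
    by (simp add: cylinder_flux_def[abs_def] Xs_def Y\<theta>_def algebra_simps)
qed

locale C2_configuration =
  fixes S :: "pt3 set" and \<phi> :: "pt3 \<Rightarrow> complex" and A :: "nat \<Rightarrow> pt3 \<Rightarrow> real"
  assumes open_S: "open S"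
    and C2_phi: "Ck_on 2 S \<phi>"
    and C1_A: "\<And>a. a \<in> {0,1,2} \<Longrightarrow> Ck_on 1 S (A a)"
begin

abbreviation Q :: "nat \<Rightarrow> pt3 \<Rightarrow> real" where
  "Q \<equiv> vorticity_potential (\<phi>, A)"

lemma differentiable_phi: "q \<in> S \<Longrightarrow> \<phi> differentiable (at q)"
  and differentiable_pd3_phi: "q \<in> S \<Longrightarrow> pd3 c \<phi> differentiable (at q)"
  and continuous_on_pd3_pd3_phi: "continuous_on S (pd3 b (pd3 c \<phi>))"
  using C2_phi open_S
  by (auto simp: numeral_2_eq_2 pd3_eta differentiable_on_eq_differentiable_at simp del: split_paired_All)

lemma differentiable_A: "a \<in> {0,1,2} \<Longrightarrow> q \<in> S \<Longrightarrow> A a differentiable (at q)"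
  and continuous_on_pd3_A: "a \<in> {0,1,2} \<Longrightarrow> continuous_on S (pd3 b (A a))"
  using C1_A open_S
  by (auto simp: pd3_eta differentiable_on_eq_differentiable_at simp del: split_paired_All)

lemma continuous_on_phi: "continuous_on S \<phi>"
  and continuous_on_pd3_phi: "continuous_on S (pd3 c \<phi>)"
  and continuous_on_A: "a \<in> {0,1,2} \<Longrightarrow> continuous_on S (A a)"
  using differentiable_phi differentiable_pd3_phi differentiable_A
  by (auto intro!: differentiable_imp_continuous_on differentiable_at_imp_differentiable_on)

lemma continuous_on_cov3: "a \<in> {0,1,2} \<Longrightarrow> continuous_on S (cov3 (\<phi>,A) a)"
  unfolding cov3_def fst_conv snd_conv
  by (intro continuous_intros continuous_on_phi continuous_on_pd3_phi continuous_on_A)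

lemma continuous_on_e3d: "continuous_on S (e3d \<epsilon> lam (\<phi>,A))"
proof -
  have e3d: "e3d \<epsilon> lam (\<phi>,A) = (\<lambda>p.
      1/2 * ((cmod (cov3 (\<phi>,A) 0 p))\<^sup>2 + (cmod (cov3 (\<phi>,A) 1 p))\<^sup>2 + (cmod (cov3 (\<phi>,A) 2 p))\<^sup>2)
    + \<epsilon>\<^sup>2/2 * ((pd3 0 (A 1) p - pd3 1 (A 0) p)\<^sup>2 + (pd3 0 (A 2) p - pd3 2 (A 0) p)\<^sup>2
        + (pd3 1 (A 2) p - pd3 2 (A 1) p)\<^sup>2)
    + lam / (8 * \<epsilon>\<^sup>2) * ((cmod (\<phi> p))\<^sup>2 - 1)\<^sup>2)"
    by (simp add: fun_eq_iff e3d_def curv3_def add.assoc)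
  show ?thesis
    unfolding e3d
    by (intro continuous_on_add continuous_on_mult_left continuous_on_power continuous_on_diff
        continuous_on_norm continuous_on_cov3 continuous_on_pd3_A continuous_on_phi continuous_on_const) auto
qed

lemma pd3_pd3_phi_commute:
  assumes "q \<in> S"
  shows "pd3 a (pd3 b \<phi>) q = pd3 b (pd3 a \<phi>) q"
  unfolding pd3_def[of a] pd3_def[of b] pd3_eta
  by (rule frechet_derivative_directional_commute[OF open_S assms])
     (use differentiable_phi differentiable_pd3_phi continuous_on_pd3_pd3_phi in \<open>simp_all add: pd3_eta\<close>)

lemma differentiable_Q: "a \<in> {0,1,2} \<Longrightarrow> q \<in> S \<Longrightarrow> Q a differentiable (at q)"
  by (intro differentiable_vorticity_potential differentiable_phi differentiable_pd3_phi differentiable_A)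

lemma continuous_on_pd3_Q:
  assumes "a \<in> {0,1,2}"
  shows "continuous_on S (pd3 b (Q a))"
proof -
  have "continuous_on S (\<lambda>q. rinner (\<i> * pd3 b \<phi> q) (cov3 (\<phi>,A) a q)
     + rinner (\<i> * \<phi> q) (pd3 b (pd3 a \<phi>) q - \<i> * complex_of_real (pd3 b (A a) q) * \<phi> q
          - \<i> * complex_of_real (A a q) * pd3 b \<phi> q) + pd3 b (A a) q)"
    unfolding rinner_eq_inner
    by (intro continuous_intros continuous_on_phi continuous_on_pd3_phi continuous_on_A
        continuous_on_pd3_pd3_phi continuous_on_pd3_A continuous_on_cov3 assms)
  then show ?thesis
    by (rule continuous_on_eq) (use pd3_vorticity_potential[of \<phi> _ a A]
        differentiable_phi differentiable_pd3_phi differentiable_A[OF assms] in simp)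
qed

lemma vort_slice_eq:
  assumes "(s,y) \<in> S"
  shows "vort (slice (\<phi>,A) s) y = (pd3 1 (Q 2) (s,y) - pd3 2 (Q 1) (s,y)) / 2"
proof -
  define W where "W = (\<lambda>z. (s,z)) -` S"
  have "open W"
    unfolding W_def using open_S by (intro continuous_open_vimage) (auto intro!: continuous_intros)
  have "y \<in> W"
    using assms by (simp add: W_def)
  have pd2_A: "pd2 b (snd (slice (\<phi>,A) s) a) y = pd3 b (A a) (s,y)" if "a \<in> {1,2}" "b \<in> {1,2}" for a b
    using pd2_slice[OF differentiable_A[OF _ assms] that(2), of a] that by (simp add: slice_def)
  have pd2_j: "pd2 b (jcur (slice (\<phi>,A) s) a) y = pd3 b (Q a) (s,y) - pd3 b (A a) (s,y)"
    if "a \<in> {1,2}" "b \<in> {1,2}" for a b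
  proof -
    have "jcur (slice (\<phi>,A) s) a z = Q a (s,z) - A a (s,z)" if "z \<in> W" for z
    proof -
      have "cov2 (slice (\<phi>,A) s) a z = cov3 (\<phi>,A) a (s,z)"
        using pd2_slice[OF differentiable_phi, of s z a] that \<open>a \<in> {1,2}\<close>
        by (simp add: cov2_def cov3_def slice_def W_def)
      then show ?thesis
        by (simp add: jcur_def vorticity_potential_def slice_def)
    qed
    moreover have diff: "(\<lambda>p. Q a p - A a p) differentiable (at (s,y))"
      using that assms by (intro differentiable_diff differentiable_Q differentiable_A) auto
    moreover have "(\<lambda>z. (s,z)) differentiable (at y)"
      by (simp add: differentiable_def has_derivative_Pair exI[of _ "\<lambda>v. (0,v)"] has_derivative_const
          has_derivative_ident)
    ultimately have "pd2 b (jcur (slice (\<phi>,A) s) a) y = pd2 b (\<lambda>z. Q a (s,z) - A a (s,z)) y"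
      unfolding pd2_def
      using frechet_derivative_transform_within_open[OF _ \<open>open W\<close> \<open>y \<in> W\<close>,
          of "\<lambda>z. Q a (s,z) - A a (s,z)" "jcur (slice (\<phi>,A) s) a"]
      differentiable_chain_at[of "\<lambda>z. (s,z)" y "\<lambda>p. Q a p - A a p"]
      by (simp add: o_def)
    also have "\<dots> = pd3 b (\<lambda>p. Q a p - A a p) (s,y)"
      by (rule pd2_slice[OF diff that(2)])
    also have "\<dots> = pd3 b (Q a) (s,y) - pd3 b (A a) (s,y)"
      using that assms by (intro pd3_diff differentiable_Q differentiable_A) auto
    finally show ?thesis .
  qed
  show ?thesis
    using pd2_j[of 2 1] pd2_j[of 1 2] pd2_A[of 2 1] pd2_A[of 1 2] by (simp add: vort_def curv2_def)
qed

lemma integral_vort_slice: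
  assumes "0 < r" "{s} \<times> cball 0 r \<subseteq> S"
  shows "integral (ball 0 r) (vort (slice (\<phi>,A) s)) = circulation Q r s / 2"
proof -
  define W where "W = (\<lambda>y. (s,y)) -` S"
  have "open W"
    unfolding W_def using open_S by (intro continuous_open_vimage) (auto intro!: continuous_intros)
  have "cball 0 r \<subseteq> W"
    using assms(2) by (auto simp: W_def)
  have dQ: "((\<lambda>y. Q a (s,y)) has_derivative (\<lambda>v. fst v * pd3 1 (Q a) (s,y) + snd v * pd3 2 (Q a) (s,y))) (at y)"
    if "y \<in> W" "a \<in> {0,1,2}" for y a
  proof -
    have "((\<lambda>y. (s,y)) has_derivative (\<lambda>v. (0,v))) (at y)"
      by (auto intro!: derivative_eq_intros)
    from has_derivative_compose[OF this has_derivative_pd3[OF differentiable_Q]] that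
    show ?thesis by (simp add: W_def)
  qed
  have cont: "continuous_on W (\<lambda>y. pd3 b (Q a) (s,y))" if "a \<in> {0,1,2}" for a b
    using continuous_on_compose2[OF continuous_on_pd3_Q[OF that] continuous_on_Pair[OF continuous_on_const continuous_on_id]]
    by (auto simp: W_def)
  have "integral (ball 0 r) (\<lambda>y. pd3 1 (Q 2) (s,y) - pd3 2 (Q 1) (s,y)) = circulation Q r s"
    using green_disc[OF \<open>open W\<close> \<open>cball 0 r \<subseteq> W\<close> \<open>0 < r\<close>, of "\<lambda>y. Q 1 (s,y)"
        "\<lambda>y. pd3 1 (Q 1) (s,y)" "\<lambda>y. pd3 2 (Q 1) (s,y)" "\<lambda>y. Q 2 (s,y)"
        "\<lambda>y. pd3 1 (Q 2) (s,y)" "\<lambda>y. pd3 2 (Q 2) (s,y)"] dQ cont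
    by (simp add: circulation_def cyl_def)
  moreover have "integral (ball 0 r) (vort (slice (\<phi>,A) s)) =
      integral (ball 0 r) (\<lambda>y. pd3 1 (Q 2) (s,y) - pd3 2 (Q 1) (s,y)) / 2"
    unfolding integral_divide[symmetric]
  proof (rule integral_cong)
    fix y :: pt2 assume "y \<in> ball 0 r"
    with assms(2) have "(s,y) \<in> S" by auto
    then show "vort (slice (\<phi>,A) s) y = (pd3 1 (Q 2) (s,y) - pd3 2 (Q 1) (s,y)) / 2"
      by (rule vort_slice_eq)
  qed
  ultimately show ?thesis
    by simp
qed

lemma time_curl_flux_le_e3d:
  assumes "q \<in> S" "\<epsilon> > 0" "lam > 0"
  shows "\<bar>(- sin \<theta> * (pd3 0 (Q 1) q - pd3 1 (Q 0) q) + cos \<theta> * (pd3 0 (Q 2) q - pd3 2 (Q 0) q)) / 2\<bar>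
    \<le> max 1 (1 / lam) * e3d \<epsilon> lam (\<phi>,A) q"
proof -
  have curl: "(pd3 0 (Q a) q - pd3 a (Q 0) q) / 2 =
      rinner (\<i> * cov3 (\<phi>,A) 0 q) (cov3 (\<phi>,A) a q) + curv3 (\<phi>,A) 0 a q * (1 - (cmod (\<phi> q))\<^sup>2) / 2"
    if "a \<in> {1,2}" for a
    using that assms(1)
    by (intro time_curl_vorticity_potential differentiable_phi differentiable_pd3_phi differentiable_A
        pd3_pd3_phi_commute) auto
  have "(- sin \<theta> * (pd3 0 (Q 1) q - pd3 1 (Q 0) q) + cos \<theta> * (pd3 0 (Q 2) q - pd3 2 (Q 0) q)) / 2
      = - sin \<theta> * ((pd3 0 (Q 1) q - pd3 1 (Q 0) q) / 2) + cos \<theta> * ((pd3 0 (Q 2) q - pd3 2 (Q 0) q) / 2)"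
    by (simp add: field_simps)
  also have "\<dots> = - sin \<theta> * (rinner (\<i> * cov3 (\<phi>,A) 0 q) (cov3 (\<phi>,A) 1 q)
        + curv3 (\<phi>,A) 0 1 q * (1 - (cmod (\<phi> q))\<^sup>2) / 2)
      + cos \<theta> * (rinner (\<i> * cov3 (\<phi>,A) 0 q) (cov3 (\<phi>,A) 2 q)
        + curv3 (\<phi>,A) 0 2 q * (1 - (cmod (\<phi> q))\<^sup>2) / 2)"
    by (simp only: curl[of 1, OF insertI1] curl[of 2, OF insertI2[OF singletonI]])
  finally show ?thesis
    using flux_density_le_e3d[OF assms(2,3), where U="(\<phi>,A)" and p=q and \<theta>=\<theta>]
    by (simp only: fst_conv)
qed

lemma vort_integral_diff_eq_cylinder_flux:
  assumes "0 < r" "0 \<le> t" "{0..t} \<times> cball 0 r \<subseteq> S"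
  shows "integral (ball 0 r) (vort (slice (\<phi>,A) t)) - integral (ball 0 r) (vort (slice (\<phi>,A) 0))
    = integral (cbox (0,0) (t,2*pi)) (cylinder_flux Q r) / 2"
proof -
  have "{s} \<times> cball 0 r \<subseteq> S" if "s \<in> {0,t}" for s
    using assms(2,3) that by auto
  moreover have "cyl r (s,\<theta>) \<in> S" if "s \<in> {0..t}" for s \<theta>
    using cyl_mem_cylinder[of r s] assms that by auto
  ultimately show ?thesis
    using integral_vort_slice[OF assms(1)]
      circulation_diff_eq_integral_cylinder_flux[OF assms(2) _ differentiable_Q continuous_on_pd3_Q]
    by (simp add: diff_divide_distrib)
qed

lemma abs_integral_cylinder_flux_le:
  assumes "0 \<le> r" "{0..t} \<times> cball 0 r \<subseteq> S" "\<epsilon> > 0" "lam > 0"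
  shows "\<bar>integral (cbox (0,0) (t,2*pi)) (cylinder_flux Q r) / 2\<bar>
    \<le> max 1 (1 / lam) * cyl_integral t r (e3d \<epsilon> lam (\<phi>,A))"
proof -
  have cyl_S: "cyl r (s,\<theta>) \<in> S" if "s \<in> {0..t}" for s \<theta>
    using cyl_mem_cylinder[of r s] assms that by auto
  have "norm (integral (cbox (0,0) (t,2*pi)) (\<lambda>p. cylinder_flux Q r p / 2))
      \<le> integral (cbox (0,0) (t,2*pi)) (\<lambda>p. max 1 (1 / lam) * (e3d \<epsilon> lam (\<phi>,A) (cyl r p) * r))"
  proof (rule integral_norm_bound_integral)
    show "(\<lambda>p. cylinder_flux Q r p / 2) integrable_on cbox (0,0) (t,2*pi)"
      unfolding cylinder_flux_def
      by (intro integrable_continuous continuous_intros continuous_on_comp_cyl[OF _ cyl_S]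
          continuous_on_pd3_Q; simp)
    show "(\<lambda>p. max 1 (1 / lam) * (e3d \<epsilon> lam (\<phi>,A) (cyl r p) * r)) integrable_on cbox (0,0) (t,2*pi)"
      by (intro integrable_continuous continuous_intros continuous_on_comp_cyl[OF continuous_on_e3d cyl_S])
    fix p assume "p \<in> cbox (0,0) (t,2*pi)"
    then have "cyl r p \<in> S"
      using cyl_S[of "fst p" "snd p"] by (cases p) (auto simp: cbox_Pair_eq)
    from mult_left_mono[OF time_curl_flux_le_e3d[OF this assms(3,4), of "snd p"] \<open>0 \<le> r\<close>]
    show "norm (cylinder_flux Q r p / 2) \<le> max 1 (1 / lam) * (e3d \<epsilon> lam (\<phi>,A) (cyl r p) * r)"
      by (simp add: cylinder_flux_def abs_mult \<open>0 \<le> r\<close> mult_ac)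
  qed
  then show ?thesis
    by (simp add: cyl_integral_eq)
qed

end

theorem lemma3p3:
  fixes T R \<epsilon> lam r t :: real and \<phi> :: "pt3 \<Rightarrow> complex" and A :: "nat \<Rightarrow> pt3 \<Rightarrow> real"
  assumes "T > 0" "R > 0" "\<epsilon> > 0" "lam > 0"
    and "open S" "{0..T} \<times> cball (0::pt2) R \<subseteq> S"
    and "smooth_on S \<phi>" "\<And>a. a \<in> {0,1,2} \<Longrightarrow> smooth_on S (A a)"
    and "r \<in> {0<..<R}" "t \<in> {0<..<T}"
  shows "\<bar>integral (ball 0 r) (vort (slice (\<phi>, A) t)) - integral (ball 0 r) (vort (slice (\<phi>, A) 0))\<bar>
         \<le> max 1 (1/lam) * cyl_integral t r (e3d \<epsilon> lam (\<phi>, A))"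
proof -
  interpret C2_configuration S \<phi> A
    using assms(5,7,8) unfolding smooth_on_def by unfold_locales blast+
  have "0 < r" "0 \<le> t" and cylinder: "{0..t} \<times> cball 0 r \<subseteq> S"
    using assms(6,9,10) by auto
  then show ?thesis
    unfolding vort_integral_diff_eq_cylinder_flux[OF \<open>0 < r\<close> \<open>0 \<le> t\<close> cylinder]
    using abs_integral_cylinder_flux_le[OF _ cylinder assms(3,4)] by simp
qed

end
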